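(* Let $V\subseteq R_d$ be a Gotzmann monomial vector space with $x_i$-decomposition $V=V_0\oplus x_iV_1$, and let $L=L_0\oplus x_iL_1$ be its $x_i$-compression. Then either $V_1$ is Gotzmann in $Q=R/(x_i)$, or $\mathbf n_1L_1\subseteq L_0$.
   Context: Let $\Bbbk$ be a field, $R=\Bbbk[x_1,\dots,x_n]/(x_1^2,\dots,x_n^2)$, $R_d$ its degree-$d$ component. A monomial vector space is a subspace of some $R_d$ spanned by monomials; $\mathbf m_1V$ is the span of $\{x_jm\}$ over monomials $m\in V$ and all $j$. A subspace $V\subseteq R_d$ is Gotzmann if $|\mathbf m_1V|\le|\mathbf m_1W|$ for every subspace $W\subseteq R_d$ with $|W|=|V|$ ($|\cdot|$ = dimension). Fix $x_i$, let $Q=R/(x_i)$, the squarefree ring in the other variables, with $\mathbf n_1W$ the span of $\{x_jm: j\neq i, m\in W \text{ monomial}\}$ and Gotzmann defined analogously in $Q$. A lex segment of $Q_e$ is a space spanned by an initial segment of the squarefree degree-$e$ monomials of $Q$ in lexicographic order (variables ordered $x_1>\dots>x_n$, omitting $x_i$). The $x_i$-decomposition of $V$ is $V=V_0\oplus x_iV_1$, with $V_0\subseteq Q_d$ spanned by the monomials of $V$ not divisible by $x_i$ and $V_1\subseteq Q_{d-1}$ spanned by the monomials $m$ with $x_im\in V$. The $x_i$-compression of $V$ is $L=L_0\oplus x_iL_1$, where $L_0\subseteq Q_d$ and $L_1\subseteq Q_{d-1}$ are the lex segments with $|L_0|=|V_0|$ and $|L_1|=|V_1|$. *)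

theory Defs
  imports Complex_Main "HOL-Library.Function_Algebras"
begin

text \<open>The squarefree ring R = k[x_1..x_n]/(x_1^2..x_n^2) is modelled as the k-vector space of
  functions from finite sets of variable indices (squarefree monomials, S standing for
  the product of x_j, j in S) to the field k.  A ring in a set X of variables
  (X = {1..n} for R, X = {1..n} - {i} for Q = R/(x_i)) is identified with the span of the
  monomials S contained in X.\<close>

definition scaleF :: "'k::field \<Rightarrow> (nat set \<Rightarrow> 'k) \<Rightarrow> (nat set \<Rightarrow> 'k)" where
  "scaleF c f = (\<lambda>S. c * f S)"

lemma vector_space_scaleF: "vector_space (scaleF :: 'k::field \<Rightarrow> _)"
  by unfold_locales (auto simp: scaleF_def algebra_simps)

abbreviation spanF :: "(nat set \<Rightarrow> 'k::field) set \<Rightarrow> (nat set \<Rightarrow> 'k) set" where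
  "spanF \<equiv> module.span scaleF"

abbreviation subspaceF :: "(nat set \<Rightarrow> 'k::field) set \<Rightarrow> bool" where
  "subspaceF \<equiv> module.subspace scaleF"

abbreviation dimF :: "(nat set \<Rightarrow> 'k::field) set \<Rightarrow> nat" where
  "dimF \<equiv> vector_space.dim scaleF"

definition mons :: "nat set \<Rightarrow> nat \<Rightarrow> nat set set" where
  "mons X d = {S. S \<subseteq> X \<and> card S = d}"

definition mon :: "nat set \<Rightarrow> (nat set \<Rightarrow> 'k::field)" where
  "mon S = (\<lambda>T. if T = S then 1 else 0)"

definition comp :: "nat set \<Rightarrow> nat \<Rightarrow> (nat set \<Rightarrow> 'k::field) set" where
  "comp X d = {f. \<forall>S. f S \<noteq> 0 \<longrightarrow> S \<in> mons X d}"

definition xmul :: "nat \<Rightarrow> (nat set \<Rightarrow> 'k::field) \<Rightarrow> (nat set \<Rightarrow> 'k)" where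
  "xmul j f = (\<lambda>T. if j \<in> T then f (T - {j}) else 0)"

text \<open>m_1 W (resp. n_1 W): span of all x_j w, j in X, w in W.\<close>
definition mult1 :: "nat set \<Rightarrow> (nat set \<Rightarrow> 'k::field) set \<Rightarrow> (nat set \<Rightarrow> 'k) set" where
  "mult1 X W = spanF {xmul j w | j w. j \<in> X \<and> w \<in> W}"

definition gotzmann :: "nat set \<Rightarrow> nat \<Rightarrow> (nat set \<Rightarrow> 'k::field) set \<Rightarrow> bool" where
  "gotzmann X d V \<longleftrightarrow> subspaceF V \<and> V \<subseteq> comp X d \<and>
     (\<forall>W :: (nat set \<Rightarrow> 'k) set. subspaceF W \<and> W \<subseteq> comp X d \<and> dimF W = dimF V \<longrightarrow>
          dimF (mult1 X V) \<le> dimF (mult1 X W))"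

text \<open>Lexicographic order with x_1 > x_2 > ... : for distinct squarefree monomials of the same
  degree, S >lex T iff the smallest variable index where they differ occurs in S.\<close>
definition lex_gt :: "nat set \<Rightarrow> nat set \<Rightarrow> bool" where
  "lex_gt S T \<longleftrightarrow> S \<noteq> T \<and> Min ((S - T) \<union> (T - S)) \<in> S"

definition lexseg :: "nat set \<Rightarrow> nat \<Rightarrow> nat \<Rightarrow> nat set set" where
  "lexseg X e k = {S \<in> mons X e. card {T \<in> mons X e. lex_gt T S} < k}"

end

theory Submission
  imports Defs
begin

text \<open>Everything is reduced to counting monomials.  A monomial space spanned by a family A
  has dimension |A|, and m_1 of it is spanned by the upper shadow of A.  Via initial (leading) monomials this
  extends to arbitrary subspaces: a subspace of dimension k grows at least as much as the
  lex segment of size k; so a monomial space is Gotzmann as soon as its upper shadow is no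
  larger than that of its lex segment.  Finally the upper shadow of A0 \<union> x_i A1 is split
  along x_i, and comparing V with its compression, whose dimension agrees with that of V,
  yields the theorem.\<close>

section \<open>The lexicographic order on squarefree monomials\<close>

lemma lex_gt_iff:
  assumes "finite S" "finite T"
  shows "lex_gt S T \<longleftrightarrow> (\<exists>m. m \<in> S \<and> m \<notin> T \<and> (\<forall>x<m. x \<in> S \<longleftrightarrow> x \<in> T))"
proof
  assume gt: "lex_gt S T"
  define m where "m = Min ((S - T) \<union> (T - S))"
  have "m \<in> (S - T) \<union> (T - S)"
    unfolding m_def using gt assms by (intro Min_in) (auto simp: lex_gt_def)
  moreover have "x \<notin> (S - T) \<union> (T - S)" if "x < m" for x
    using that assms unfolding m_def by (meson Min_le finite_Diff finite_UnI not_le)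
  ultimately show "\<exists>m. m \<in> S \<and> m \<notin> T \<and> (\<forall>x<m. x \<in> S \<longleftrightarrow> x \<in> T)"
    using gt unfolding lex_gt_def m_def by blast
next
  assume "\<exists>m. m \<in> S \<and> m \<notin> T \<and> (\<forall>x<m. x \<in> S \<longleftrightarrow> x \<in> T)"
  then obtain m where m: "m \<in> S" "m \<notin> T" "\<forall>x<m. x \<in> S \<longleftrightarrow> x \<in> T" by blast
  have "Min ((S - T) \<union> (T - S)) = m"
    using assms m by (intro Min_eqI) (auto simp: not_less[symmetric])
  then show "lex_gt S T" using m unfolding lex_gt_def by auto
qed

lemma lex_irrefl: "\<not> lex_gt S S"
  by (simp add: lex_gt_def)

lemma lex_asym: "finite S \<Longrightarrow> finite T \<Longrightarrow> lex_gt S T \<Longrightarrow> \<not> lex_gt T S"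
  unfolding lex_gt_iff by (metis linorder_neqE_nat)

lemma lex_total:
  assumes "finite S" "finite T" "S \<noteq> T"
  shows "lex_gt S T \<or> lex_gt T S"
proof -
  have "Min ((S - T) \<union> (T - S)) \<in> (S - T) \<union> (T - S)" using assms by (intro Min_in) auto
  moreover have "(T - S) \<union> (S - T) = (S - T) \<union> (T - S)" by auto
  ultimately show ?thesis using assms(3) unfolding lex_gt_def by auto
qed

lemma lex_trans:
  assumes "finite S" "finite T" "finite R" "lex_gt S T" "lex_gt T R"
  shows "lex_gt S R"
proof -
  obtain a where a: "a \<in> S" "a \<notin> T" "\<forall>x<a. x \<in> S \<longleftrightarrow> x \<in> T"
    using assms lex_gt_iff by blast
  obtain b where b: "b \<in> T" "b \<notin> R" "\<forall>x<b. x \<in> T \<longleftrightarrow> x \<in> R"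
    using assms lex_gt_iff by blast
  have "a \<noteq> b" using a b by auto
  then have "(\<exists>m. m \<in> S \<and> m \<notin> R \<and> (\<forall>x<m. x \<in> S \<longleftrightarrow> x \<in> R))"
    using a b by (metis linorder_neqE_nat order.strict_trans)
  then show ?thesis using lex_gt_iff assms by blast
qed

lemma lex_max_exists:
  assumes "finite A" "A \<noteq> {}" "\<forall>S\<in>A. finite S"
  shows "\<exists>S\<in>A. \<forall>T\<in>A. T \<noteq> S \<longrightarrow> lex_gt S T"
  using assms
proof (induction A rule: finite_ne_induct)
  case (insert x F)
  then obtain S where S: "S \<in> F" "\<forall>T\<in>F. T \<noteq> S \<longrightarrow> lex_gt S T" by auto
  show ?case
  proof (cases "lex_gt x S")
    case True
    then show ?thesis using S insert.prems lex_trans by (metis insert_iff)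
  next
    case False
    then have "x = S \<or> lex_gt S x" using lex_total insert.prems S(1) by auto
    then show ?thesis using S by auto
  qed
qed auto

section \<open>Lex segments and upper shadows of families of monomials\<close>

lemma finite_mons: "finite X \<Longrightarrow> finite (mons X e)"
  unfolding mons_def by (rule finite_subset[of _ "Pow X"]) auto

lemma mons_finite: "finite X \<Longrightarrow> S \<in> mons X e \<Longrightarrow> finite S"
  unfolding mons_def using finite_subset by auto

lemma finite_mons_family: "finite X \<Longrightarrow> F \<subseteq> mons X e \<Longrightarrow> finite F"
  using finite_mons finite_subset by blast

lemma mons_insert: "S \<in> mons X e \<Longrightarrow> finite X \<Longrightarrow> j \<in> X \<Longrightarrow> j \<notin> S \<Longrightarrow> insert j S \<in> mons X (Suc e)"
  unfolding mons_def by (auto dest: finite_subset)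

text \<open>The upper shadow of a family F of degree-e monomials: all monomials x_j S with
  S in F and j in X not dividing S.  It indexes the monomial basis of m_1 (span F).\<close>

definition upshadow :: "nat set \<Rightarrow> nat set set \<Rightarrow> nat set set" where
  "upshadow X F = {insert j S | S j. S \<in> F \<and> j \<in> X \<and> j \<notin> S}"

lemma upshadow_memI: "k \<in> T \<Longrightarrow> k \<in> X \<Longrightarrow> T - {k} \<in> F \<Longrightarrow> T \<in> upshadow X F"
  unfolding upshadow_def by (rule CollectI, rule exI[of _ "T - {k}"], rule exI[of _ k]) auto

lemma upshadow_mons: "F \<subseteq> mons X e \<Longrightarrow> finite X \<Longrightarrow> upshadow X F \<subseteq> mons X (Suc e)"
  unfolding upshadow_def using mons_insert by blast

lemma finite_upshadow: "F \<subseteq> mons X e \<Longrightarrow> finite X \<Longrightarrow> finite (upshadow X F)"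
  by (rule finite_mons_family[OF _ upshadow_mons])

lemma upshadow_mono: "F \<subseteq> G \<Longrightarrow> upshadow X F \<subseteq> upshadow X G"
  unfolding upshadow_def by blast

lemma upshadow_Un: "upshadow X (A \<union> B) = upshadow X A \<union> upshadow X B"
  unfolding upshadow_def by blast

text \<open>Lex up-sets: families of degree-e monomials closed under passing to lex-larger
  monomials.  These are exactly the lex segments (lemma lex_upset_eq_lexseg).\<close>

definition lex_upset :: "nat set \<Rightarrow> nat \<Rightarrow> nat set set \<Rightarrow> bool" where
  "lex_upset X e G \<longleftrightarrow> G \<subseteq> mons X e \<and> (\<forall>S\<in>G. \<forall>T\<in>mons X e. lex_gt T S \<longrightarrow> T \<in> G)"

definition lex_rank :: "nat set \<Rightarrow> nat \<Rightarrow> nat set \<Rightarrow> nat" where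
  "lex_rank X e S = card {T \<in> mons X e. lex_gt T S}"

lemma lexseg_rank: "lexseg X e k = {S \<in> mons X e. lex_rank X e S < k}"
  unfolding lexseg_def lex_rank_def ..

lemma lexseg_sub: "lexseg X e k \<subseteq> mons X e"
  unfolding lexseg_def by auto

lemma lexseg_mono: "k \<le> k' \<Longrightarrow> lexseg X e k \<subseteq> lexseg X e k'"
  unfolding lexseg_def by auto

lemma lex_rank_mono:
  assumes "finite X" "S \<in> mons X e" "T \<in> mons X e" "lex_gt T S"
  shows "lex_rank X e T < lex_rank X e S"
  unfolding lex_rank_def
proof (rule psubset_card_mono)
  show "finite {R \<in> mons X e. lex_gt R S}" using finite_mons[OF assms(1)] by simp
  have "lex_gt R S" if "R \<in> mons X e" "lex_gt R T" for R
    using that assms lex_trans[of R T S] mons_finite by blast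
  then show "{R \<in> mons X e. lex_gt R T} \<subset> {R \<in> mons X e. lex_gt R S}"
    using assms lex_irrefl by blast
qed

lemma lex_rank_less_card:
  assumes "finite X" "S \<in> mons X e"
  shows "lex_rank X e S < card (mons X e)"
proof -
  have "lex_rank X e S \<le> card (mons X e - {S})"
    unfolding lex_rank_def using finite_mons[OF assms(1)] lex_irrefl by (intro card_mono) auto
  also have "\<dots> < card (mons X e)" using assms finite_mons by (metis card_Diff1_less)
  finally show ?thesis .
qed

lemma lex_rank_inj: "finite X \<Longrightarrow> inj_on (lex_rank X e) (mons X e)"
  by (rule inj_onI) (metis lex_total lex_rank_mono mons_finite less_irrefl)

lemma card_lexseg:
  assumes f: "finite X" and k: "k \<le> card (mons X e)"
  shows "card (lexseg X e k) = k"
proof -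
  let ?M = "mons X e"
  have "lex_rank X e ` ?M = {..<card ?M}"
  proof (rule card_subset_eq)
    show "lex_rank X e ` ?M \<subseteq> {..<card ?M}" using lex_rank_less_card[OF f] by auto
    show "card (lex_rank X e ` ?M) = card {..<card ?M}"
      using card_image[OF lex_rank_inj[OF f]] by simp
  qed simp
  then have "lex_rank X e ` lexseg X e k = {..<k}"
    using k unfolding lexseg_rank by (auto simp: image_iff)
  moreover have "inj_on (lex_rank X e) (lexseg X e k)"
    using lex_rank_inj[OF f] lexseg_sub by (rule inj_on_subset)
  ultimately show ?thesis by (metis card_image card_lessThan)
qed

lemma lexseg_lex_upset: "finite X \<Longrightarrow> lex_upset X e (lexseg X e k)"
  unfolding lex_upset_def lexseg_rank using lex_rank_mono by fastforce

lemma lex_upset_eq_lexseg: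
  assumes f: "finite X" and u: "lex_upset X e G"
  shows "G = lexseg X e (card G)"
proof
  have G: "G \<subseteq> mons X e" using u lex_upset_def by auto
  have fG: "finite G" using finite_mons_family[OF f G] .
  show "G \<subseteq> lexseg X e (card G)"
  proof
    fix S assume S: "S \<in> G"
    have "{T \<in> mons X e. lex_gt T S} \<subseteq> G - {S}" using u S lex_irrefl unfolding lex_upset_def by auto
    then have "card {T \<in> mons X e. lex_gt T S} \<le> card (G - {S})" using fG by (intro card_mono) auto
    also have "\<dots> < card G" using S fG by (metis card_Diff1_less)
    finally show "S \<in> lexseg X e (card G)" using S G unfolding lexseg_def by auto
  qed
  show "lexseg X e (card G) \<subseteq> G"
  proof
    fix S assume S: "S \<in> lexseg X e (card G)"
    have Sm: "S \<in> mons X e" using S lexseg_sub by auto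
    show "S \<in> G"
    proof (rule ccontr)
      assume nS: "S \<notin> G"
      have "lex_gt T S" if "T \<in> G" for T
        using that u Sm G nS lex_total[OF mons_finite[OF f] mons_finite[OF f Sm], of T]
        unfolding lex_upset_def by blast
      then have "card G \<le> card {T \<in> mons X e. lex_gt T S}"
        using G finite_mons[OF f] by (intro card_mono) auto
      then show False using S unfolding lexseg_def by auto
    qed
  qed
qed

lemma lex_upset_nested:
  assumes f: "finite X" and A: "lex_upset X e A" and B: "lex_upset X e B"
  shows "A \<subseteq> B \<or> B \<subseteq> A"
proof (rule ccontr)
  assume "\<not> ?thesis"
  then obtain a b where a: "a \<in> A" "a \<notin> B" and b: "b \<in> B" "b \<notin> A" by auto
  have "a \<in> mons X e" "b \<in> mons X e" using a b A B lex_upset_def by auto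
  then have "lex_gt a b \<or> lex_gt b a" using a b lex_total mons_finite[OF f] by metis
  then show False using a b A B \<open>a \<in> mons X e\<close> \<open>b \<in> mons X e\<close> unfolding lex_upset_def by blast
qed

lemma upshadow_lex_upsetI:
  assumes f: "finite X" and L: "lex_upset X e L" and S: "S \<in> L"
    and T: "T \<in> mons X (Suc e)" and k: "k \<in> T" and ge: "T - {k} = S \<or> lex_gt (T - {k}) S"
  shows "T \<in> upshadow X L"
proof (rule upshadow_memI[OF k])
  show "k \<in> X" using T k unfolding mons_def by auto
  have "T - {k} \<in> mons X e" using T k mons_finite[OF f T] unfolding mons_def by auto
  then show "T - {k} \<in> L" using L S ge unfolding lex_upset_def by blast
qed

text \<open>Given x_j S in the shadow and T' >lex x_j S
  with first difference m, delete from T' the variable j (if j < m), a variable beyond m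
  (if there is one), or else m itself.\<close>

lemma upshadow_lex_upset:
  assumes f: "finite X" and L: "lex_upset X e L"
  shows "lex_upset X (Suc e) (upshadow X L)"
  unfolding lex_upset_def
proof (intro conjI ballI impI)
  have Lm: "L \<subseteq> mons X e" using L lex_upset_def by blast
  show "upshadow X L \<subseteq> mons X (Suc e)" using upshadow_mons[OF Lm f] .
  fix T T' assume T: "T \<in> upshadow X L" and T': "T' \<in> mons X (Suc e)" and gt: "lex_gt T' T"
  obtain S j where Tj: "T = insert j S" and S: "S \<in> L" and j: "j \<in> X" "j \<notin> S"
    using T unfolding upshadow_def by blast
  have Sm: "S \<in> mons X e" using S Lm by blast
  have fS: "finite S" using mons_finite[OF f Sm] .
  have fT': "finite T'" using mons_finite[OF f T'] .
  have fT: "finite T" using Tj fS by simp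
  obtain m where m: "m \<in> T'" "m \<notin> T" "\<forall>x<m. x \<in> T' \<longleftrightarrow> x \<in> T"
    using gt lex_gt_iff[OF fT' fT] by blast
  have mS: "m \<notin> S" using m(2) Tj by simp
  have beats: "lex_gt (T' - {k}) S" if "k \<noteq> m" "\<forall>x<m. x \<in> T' - {k} \<longleftrightarrow> x \<in> S" for k
    unfolding lex_gt_iff[OF finite_Diff[OF fT'] fS] using m(1) mS that by blast
  note into = upshadow_lex_upsetI[OF f L S T']
  have "j \<noteq> m" using m Tj by auto
  then consider "j < m" | "m < j" "\<exists>k\<in>T'. m < k" | "m < j" "\<forall>k\<in>T'. k \<le> m"
    by (meson linorder_neqE_nat not_le)
  then show "T' \<in> upshadow X L"
  proof cases
    case 1
    have "j \<in> T'" using 1 m(3) Tj by simp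
    moreover have "\<forall>x<m. x \<in> T' - {j} \<longleftrightarrow> x \<in> S" using m(3) Tj j(2) by auto
    then have "lex_gt (T' - {j}) S" by (rule beats[OF \<open>j \<noteq> m\<close>])
    ultimately show ?thesis by (intro into disjI2)
  next
    case 2
    then obtain k where k: "k \<in> T'" "m < k" by blast
    have "\<forall>x<m. x \<in> T' - {k} \<longleftrightarrow> x \<in> S" using m(3) Tj j(2) k(2) 2(1) by auto
    then have "lex_gt (T' - {k}) S" using beats k(2) by simp
    then show ?thesis by (intro into[OF k(1)] disjI2)
  next
    case 3
    have "x \<in> S" if x: "x \<in> T'" "x \<noteq> m" for x
    proof -
      have "x < m" using x 3(2) by force
      then show ?thesis using m(3) x(1) Tj 3(1) by auto
    qed
    then have "T' - {m} \<subseteq> S" by blast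
    moreover have "card (T' - {m}) = card S" using T' m(1) Sm fT' unfolding mons_def by simp
    ultimately have "T' - {m} = S" using fS by (intro card_subset_eq) auto
    then show ?thesis by (intro into[OF m(1)] disjI1)
  qed
qed

section \<open>Lex segments minimise the upper shadow (Kruskal--Katona)\<close>

text \<open>The proof is the classical compression argument.  The (U,V)-shift of a monomial
  A replaces the variables V dividing A by the variables U; the (U,V)-compression of a
  family shifts every member whose shift is not already present.  Compressions preserve
  the size of a family, do not enlarge its upper shadow (given compressedness for the
  smaller pairs), and move it up in the lex order.  A family of least total lex rank
  is therefore compressed for all pairs, which forces it to be a lex segment.\<close>

definition shift :: "nat set \<Rightarrow> nat set \<Rightarrow> nat set \<Rightarrow> nat set" where
  "shift U V A = (A - V) \<union> U"

definition shiftable :: "nat set \<Rightarrow> nat set \<Rightarrow> nat set set \<Rightarrow> nat set \<Rightarrow> bool" where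
  "shiftable U V F A \<longleftrightarrow> V \<subseteq> A \<and> U \<inter> A = {} \<and> shift U V A \<notin> F"

definition cshift :: "nat set \<Rightarrow> nat set \<Rightarrow> nat set set \<Rightarrow> nat set \<Rightarrow> nat set" where
  "cshift U V F A = (if shiftable U V F A then shift U V A else A)"

definition compress :: "nat set \<Rightarrow> nat set \<Rightarrow> nat set set \<Rightarrow> nat set set" where
  "compress U V F = cshift U V F ` F"

definition compressed :: "nat set \<Rightarrow> nat set \<Rightarrow> nat set set \<Rightarrow> bool" where
  "compressed U V F \<longleftrightarrow> (\<forall>A\<in>F. V \<subseteq> A \<and> U \<inter> A = {} \<longrightarrow> shift U V A \<in> F)"

text \<open>Admissible pairs: disjoint sets of variables of equal positive size whose smallest
  variable lies in U, so that shifting strictly increases a monomial in the lex order.\<close>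

definition valid_pair :: "nat set \<Rightarrow> nat set \<Rightarrow> nat set \<Rightarrow> bool" where
  "valid_pair X U V \<longleftrightarrow> U \<subseteq> X \<and> V \<subseteq> X \<and> U \<inter> V = {} \<and> card U = card V \<and> U \<noteq> {}
     \<and> finite U \<and> finite V \<and> Min (U \<union> V) \<in> U"

text \<open>The total lex rank of a family; it decreases under every nontrivial compression.\<close>

definition lex_weight :: "nat set \<Rightarrow> nat \<Rightarrow> nat set set \<Rightarrow> nat" where
  "lex_weight X e G = (\<Sum>A\<in>G. lex_rank X e A)"

lemma shift_back: "U \<inter> V = {} \<Longrightarrow> V \<subseteq> A \<Longrightarrow> U \<inter> A = {} \<Longrightarrow> (shift U V A - U) \<union> V = A"
  unfolding shift_def by auto

lemma mem_compress:
  assumes UV: "U \<inter> V = {}"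
  shows "B \<in> compress U V H \<longleftrightarrow> (B \<in> H \<and> \<not> shiftable U V H B) \<or>
           (B \<notin> H \<and> U \<subseteq> B \<and> V \<inter> B = {} \<and> (B - U) \<union> V \<in> H)"
proof
  assume "B \<in> compress U V H"
  then obtain A where A: "A \<in> H" and B: "B = cshift U V H A"
    unfolding compress_def by blast
  show "(B \<in> H \<and> \<not> shiftable U V H B) \<or> (B \<notin> H \<and> U \<subseteq> B \<and> V \<inter> B = {} \<and> (B - U) \<union> V \<in> H)"
  proof (cases "shiftable U V H A")
    case True
    then have "B = shift U V A" "B \<notin> H" "(B - U) \<union> V = A"
      using B shift_back[OF UV] unfolding cshift_def shiftable_def by auto
    then show ?thesis using A True UV unfolding shiftable_def shift_def by auto
  next
    case False then show ?thesis using A B unfolding cshift_def by auto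
  qed
next
  assume h: "(B \<in> H \<and> \<not> shiftable U V H B) \<or> (B \<notin> H \<and> U \<subseteq> B \<and> V \<inter> B = {} \<and> (B - U) \<union> V \<in> H)"
  show "B \<in> compress U V H"
  proof (cases "B \<in> H \<and> \<not> shiftable U V H B")
    case True then show ?thesis unfolding compress_def cshift_def by force
  next
    case False
    then have h2: "B \<notin> H" "U \<subseteq> B" "V \<inter> B = {}" "(B - U) \<union> V \<in> H" using h by auto
    let ?A = "(B - U) \<union> V"
    have "shift U V ?A = B" using h2 UV unfolding shift_def by auto
    then have "B = cshift U V H ?A"
      using h2 UV unfolding cshift_def shiftable_def by auto
    then show ?thesis unfolding compress_def using h2(4) by (rule image_eqI)
  qed
qed

lemma inj_cshift:
  assumes UV: "U \<inter> V = {}"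
  shows "inj_on (cshift U V F) F"
proof (rule inj_onI)
  fix A A' assume A: "A \<in> F" and A': "A' \<in> F" and eq: "cshift U V F A = cshift U V F A'"
  have unshift: "(shift U V A - U) \<union> V = A" if "shiftable U V F A" for A
    using that shift_back[OF UV] unfolding shiftable_def by auto
  show "A = A'"
  proof (cases "shiftable U V F A"; cases "shiftable U V F A'")
    assume "shiftable U V F A" "shiftable U V F A'"
    then show ?thesis using eq unshift unfolding cshift_def by metis
  next
    assume a: "shiftable U V F A" "\<not> shiftable U V F A'"
    then have "shift U V A = A'" using eq unfolding cshift_def by simp
    then show ?thesis using a(1) A' unfolding shiftable_def by simp
  next
    assume a: "\<not> shiftable U V F A" "shiftable U V F A'"
    then have "shift U V A' = A" using eq unfolding cshift_def by simp
    then show ?thesis using a(2) A unfolding shiftable_def by simp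
  next
    assume "\<not> shiftable U V F A" "\<not> shiftable U V F A'"
    then show ?thesis using eq unfolding cshift_def by simp
  qed
qed

lemma card_compress: "U \<inter> V = {} \<Longrightarrow> card (compress U V F) = card F"
  unfolding compress_def by (rule card_image[OF inj_cshift])

lemma shift_mons:
  assumes A: "A \<in> mons X e" and "V \<subseteq> A" "U \<inter> A = {}" and v: "valid_pair X U V" and f: "finite X"
  shows "shift U V A \<in> mons X e"
proof -
  have AX: "A \<subseteq> X" and cA: "card A = e" and fA: "finite A" using A mons_finite[OF f A] unfolding mons_def by auto
  have "card ((A - V) \<union> U) = card (A - V) + card U"
    using assms fA v unfolding valid_pair_def by (intro card_Un_disjoint) auto
  also have "\<dots> = card A"
    using assms fA v card_mono[OF fA \<open>V \<subseteq> A\<close>] unfolding valid_pair_def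
    by (simp add: card_Diff_subset finite_subset)
  finally show ?thesis using AX v cA unfolding mons_def shift_def valid_pair_def by auto
qed

lemma compress_mons:
  "G \<subseteq> mons X e \<Longrightarrow> valid_pair X U V \<Longrightarrow> finite X \<Longrightarrow> compress U V G \<subseteq> mons X e"
  using shift_mons unfolding compress_def cshift_def shiftable_def by auto

lemma shift_lex_gt:
  assumes "finite A" "V \<subseteq> A" "U \<inter> A = {}" "valid_pair X U V"
  shows "lex_gt (shift U V A) A"
proof -
  have v: "finite U" "finite V" "Min (U \<union> V) \<in> U" using assms(4) unfolding valid_pair_def by auto
  let ?m = "Min (U \<union> V)"
  have "x \<notin> U \<union> V" if "x < ?m" for x using that v by (meson Min_le finite_UnI leD)
  then have "\<forall>x<?m. x \<in> shift U V A \<longleftrightarrow> x \<in> A" unfolding shift_def by auto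
  moreover have "?m \<in> shift U V A" "?m \<notin> A" using v assms(3) unfolding shift_def by auto
  ultimately show ?thesis using lex_gt_iff[of "shift U V A" A] assms v unfolding shift_def by blast
qed

lemma lex_weight_compress:
  assumes f: "finite X" and G: "G \<subseteq> mons X e" and v: "valid_pair X U V" and nc: "\<not> compressed U V G"
  shows "lex_weight X e (compress U V G) < lex_weight X e G"
proof -
  have UV: "U \<inter> V = {}" using v valid_pair_def by auto
  have lt: "lex_rank X e (shift U V A) < lex_rank X e A" if A: "A \<in> G" "shiftable U V G A" for A
  proof -
    have Am: "A \<in> mons X e" using A G by auto
    have m: "V \<subseteq> A" "U \<inter> A = {}" using A unfolding shiftable_def by auto
    show ?thesis
      using lex_rank_mono[OF f Am shift_mons[OF Am m v f] shift_lex_gt[OF mons_finite[OF f Am] m v]] .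
  qed
  have "lex_weight X e (compress U V G) = (\<Sum>A\<in>G. lex_rank X e (cshift U V G A))"
    unfolding lex_weight_def compress_def by (rule sum.reindex_cong[OF inj_cshift[OF UV] refl refl])
  also have "\<dots> < (\<Sum>A\<in>G. lex_rank X e A)"
  proof (rule sum_strict_mono_ex1[OF finite_mons_family[OF f G]])
    show "\<forall>A\<in>G. lex_rank X e (cshift U V G A) \<le> lex_rank X e A"
      using lt unfolding cshift_def by (auto simp: less_imp_le)
    obtain A where "A \<in> G" "shiftable U V G A" using nc unfolding compressed_def shiftable_def by blast
    then show "\<exists>A\<in>G. lex_rank X e (cshift U V G A) < lex_rank X e A"
      using lt unfolding cshift_def by auto
  qed
  finally show ?thesis unfolding lex_weight_def .
qed

text \<open>The next two lemmas treat a monomial x_j A' of the shadow of the compressed family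
  according to whether A' was left in place or arose by a shift.\<close>

lemma upshadow_compress_unshifted:
  assumes UV: "U \<inter> V = {}" and UX: "U \<subseteq> X"
    and hyp: "\<forall>v\<in>V. \<exists>u\<in>U. compressed (U - {u}) (V - {v}) F"
    and A': "A' \<in> F" "\<not> shiftable U V F A'" and x: "x \<in> X" "x \<notin> A'"
  shows "insert x A' \<in> compress U V (upshadow X F)"
proof -
  let ?B = "insert x A'"
  have BF: "?B \<in> upshadow X F" using A' x unfolding upshadow_def by blast
  have "\<not> shiftable U V (upshadow X F) ?B"
  proof
    assume "shiftable U V (upshadow X F) ?B"
    then have VB: "V \<subseteq> ?B" and UB: "U \<inter> ?B = {}" and nB: "shift U V ?B \<notin> upshadow X F"
      unfolding shiftable_def by auto
    show False
    proof (cases "x \<in> V")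
      case False
      then have "V \<subseteq> A'" "U \<inter> A' = {}" using VB UB by auto
      then have "shift U V A' \<in> F" using A' unfolding shiftable_def by auto
      moreover have "shift U V ?B = insert x (shift U V A')" using False unfolding shift_def by auto
      moreover have "x \<notin> shift U V A'" using x UB unfolding shift_def by auto
      ultimately have "shift U V ?B \<in> upshadow X F" using x unfolding upshadow_def by blast
      then show False using nB by simp
    next
      case True
      then obtain u where u: "u \<in> U" and cu: "compressed (U - {u}) (V - {x}) F" using hyp by blast
      have "V - {x} \<subseteq> A'" "(U - {u}) \<inter> A' = {}" using VB UB by auto
      then have A'': "shift (U - {u}) (V - {x}) A' \<in> F" using cu A' unfolding compressed_def by blast
      have "shift U V ?B = insert u (shift (U - {u}) (V - {x}) A')" using True x u unfolding shift_def by auto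
      moreover have "u \<notin> shift (U - {u}) (V - {x}) A'" using UB u unfolding shift_def by auto
      ultimately have "shift U V ?B \<in> upshadow X F" using A'' u UX unfolding upshadow_def by blast
      then show False using nB by simp
    qed
  qed
  then show ?thesis using BF mem_compress[OF UV] by blast
qed

lemma upshadow_compress_shifted:
  assumes UV: "U \<inter> V = {}" and Une: "U \<noteq> {}" and UX: "U \<subseteq> X"
    and hyp: "\<forall>v\<in>V. \<exists>u\<in>U. compressed (U - {u}) (V - {v}) F"
    and A': "U \<subseteq> A'" "V \<inter> A' = {}" "(A' - U) \<union> V \<in> F" and x: "x \<in> X" "x \<notin> A'"
  shows "insert x A' \<in> compress U V (upshadow X F)"
proof -
  let ?B = "insert x A'"
  define A where "A = (A' - U) \<union> V"
  have AF: "A \<in> F" using A' A_def by simp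
  show ?thesis
  proof (cases "?B \<in> upshadow X F")
    case True
    have "\<not> shiftable U V (upshadow X F) ?B" using A' Une unfolding shiftable_def by auto
    then show ?thesis using True mem_compress[OF UV] by blast
  next
    case nBF: False
    have "x \<notin> V"
    proof
      assume xV: "x \<in> V"
      then obtain u where u: "u \<in> U" and cu: "compressed (U - {u}) (V - {x}) F" using hyp by blast
      have "V - {x} \<subseteq> A" "(U - {u}) \<inter> A = {}" using A_def UV by auto
      then have A'': "shift (U - {u}) (V - {x}) A \<in> F" using cu AF unfolding compressed_def by blast
      have "?B = insert u (shift (U - {u}) (V - {x}) A)"
        using xV u A' UV unfolding A_def shift_def by auto
      moreover have "u \<notin> shift (U - {u}) (V - {x}) A" using u UV unfolding A_def shift_def by auto
      ultimately have "?B \<in> upshadow X F" using A'' u UX unfolding upshadow_def by blast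
      then show False using nBF by simp
    qed
    have "x \<notin> U" using A' x by auto
    then have "(?B - U) \<union> V = insert x A" "x \<notin> A" using x \<open>x \<notin> V\<close> unfolding A_def by auto
    then have "(?B - U) \<union> V \<in> upshadow X F" using AF x unfolding upshadow_def by blast
    moreover have "U \<subseteq> ?B" "V \<inter> ?B = {}" using A' \<open>x \<notin> V\<close> by auto
    ultimately show ?thesis using nBF mem_compress[OF UV] by blast
  qed
qed

lemma upshadow_compress:
  assumes UV: "U \<inter> V = {}" and Une: "U \<noteq> {}" and UX: "U \<subseteq> X"
    and hyp: "\<forall>v\<in>V. \<exists>u\<in>U. compressed (U - {u}) (V - {v}) F"
  shows "upshadow X (compress U V F) \<subseteq> compress U V (upshadow X F)"
proof
  fix B assume "B \<in> upshadow X (compress U V F)"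
  then obtain A' x where B: "B = insert x A'" and A': "A' \<in> compress U V F" and x: "x \<in> X" "x \<notin> A'"
    unfolding upshadow_def by blast
  then consider "A' \<in> F" "\<not> shiftable U V F A'" | "U \<subseteq> A'" "V \<inter> A' = {}" "(A' - U) \<union> V \<in> F"
    using mem_compress[OF UV] by blast
  then show "B \<in> compress U V (upshadow X F)"
    using upshadow_compress_unshifted[OF UV UX hyp _ _ x] upshadow_compress_shifted[OF UV Une UX hyp _ _ _ x] B
    by cases auto
qed

lemma compressed_empty: "compressed {} {} F"
  unfolding compressed_def shift_def by simp

text \<open>Removing any variable of V from a valid pair, together with a variable of U other
  than the smallest variable of the pair, leaves a valid pair, or the empty pair when
  both sets were singletons.\<close>

lemma valid_pair_shrink:
  assumes v: "valid_pair X U V" and w: "w \<in> V"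
  shows "\<exists>u\<in>U. (U - {u} = {} \<and> V - {w} = {}) \<or> valid_pair X (U - {u}) (V - {w})"
proof (cases "card U = 1")
  case True
  then obtain u where "U = {u}" by (rule card_1_singletonE)
  moreover have "V = {w}" using v w True unfolding valid_pair_def by (metis card_1_singletonE singletonD)
  ultimately show ?thesis by auto
next
  case False
  have fin: "finite U" "finite V" and mU: "Min (U \<union> V) \<in> U" and Une: "U \<noteq> {}"
    using v unfolding valid_pair_def by auto
  let ?m = "Min (U \<union> V)"
  have "\<not> U \<subseteq> {?m}"
  proof
    assume "U \<subseteq> {?m}"
    then have "card U \<le> 1" using card_mono[of "{?m}" U] by simp
    then show False using False Une fin by (simp add: le_Suc_eq)
  qed
  then obtain u where u: "u \<in> U" "u \<noteq> ?m" by blast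
  have "Min ((U - {u}) \<union> (V - {w})) = ?m"
    using mU u fin by (intro Min_eqI) auto
  then have "valid_pair X (U - {u}) (V - {w})"
    using v u w mU unfolding valid_pair_def by auto
  then show ?thesis using u by blast
qed

lemma least_weight_compressed:
  assumes f: "finite X" and G: "G \<subseteq> mons X e"
    and least: "\<And>H. H \<subseteq> mons X e \<Longrightarrow> card H = card G \<Longrightarrow>
                  card (upshadow X H) \<le> card (upshadow X G) \<Longrightarrow> lex_weight X e G \<le> lex_weight X e H"
    and v: "valid_pair X U V"
  shows "compressed U V G"
  using v
proof (induction "card U" arbitrary: U V rule: less_induct)
  case less
  have UV: "U \<inter> V = {}" and Une: "U \<noteq> {}" and UX: "U \<subseteq> X" and fU: "finite U"
    using less.prems unfolding valid_pair_def by auto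
  have hyp: "\<forall>w\<in>V. \<exists>u\<in>U. compressed (U - {u}) (V - {w}) G"
  proof
    fix w assume "w \<in> V"
    then obtain u where u: "u \<in> U"
      and uw: "(U - {u} = {} \<and> V - {w} = {}) \<or> valid_pair X (U - {u}) (V - {w})"
      using valid_pair_shrink[OF less.prems] by blast
    from uw have "compressed (U - {u}) (V - {w}) G"
    proof
      assume "U - {u} = {} \<and> V - {w} = {}"
      then show ?thesis using compressed_empty by metis
    next
      assume "valid_pair X (U - {u}) (V - {w})"
      then show ?thesis using less.hyps card_Diff1_less[OF fU u] by blast
    qed
    then show "\<exists>u\<in>U. compressed (U - {u}) (V - {w}) G" using u by blast
  qed
  show "compressed U V G"
  proof (rule ccontr)
    assume nc: "\<not> compressed U V G"
    have "card (upshadow X (compress U V G)) \<le> card (compress U V (upshadow X G))"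
      using upshadow_compress[OF UV Une UX hyp] finite_upshadow[OF G f]
      unfolding compress_def by (intro card_mono) auto
    also have "\<dots> = card (upshadow X G)" by (rule card_compress[OF UV])
    finally have "lex_weight X e G \<le> lex_weight X e (compress U V G)"
      using least compress_mons[OF G less.prems f] card_compress[OF UV] by auto
    then show False using lex_weight_compress[OF f G less.prems nc] by simp
  qed
qed

text \<open>A family compressed for every valid pair is a lex up-set: if T >lex S with S in the
  family, shifting S by the pair (T - S, S - T) yields T.\<close>

lemma compressed_lex_upset:
  assumes f: "finite X" and G: "G \<subseteq> mons X e"
    and comp: "\<And>U V. valid_pair X U V \<Longrightarrow> compressed U V G"
  shows "lex_upset X e G"
  unfolding lex_upset_def
proof (intro conjI ballI impI G)
  fix S T assume S: "S \<in> G" and T: "T \<in> mons X e" and gt: "lex_gt T S"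
  have Sm: "S \<in> mons X e" using S G by auto
  have fS: "finite S" and fT: "finite T" using mons_finite[OF f] Sm T by auto
  have "card (T - S) = card (S - T)"
    using Sm T fS fT unfolding mons_def by (simp add: card_Diff_subset_Int Int_commute)
  moreover have "Min ((T - S) \<union> (S - T)) \<in> T - S"
    using gt fS fT Min_in[of "(T - S) \<union> (S - T)"] unfolding lex_gt_def by auto
  ultimately have "valid_pair X (T - S) (S - T)"
    using Sm T fS fT unfolding valid_pair_def mons_def by auto
  then have "shift (T - S) (S - T) S \<in> G" using comp S unfolding compressed_def by blast
  moreover have "shift (T - S) (S - T) S = T" unfolding shift_def by auto
  ultimately show "T \<in> G" by simp
qed

theorem lexseg_least_upshadow:
  assumes f: "finite X" and F: "F \<subseteq> mons X e"
  shows "card (upshadow X (lexseg X e (card F))) \<le> card (upshadow X F)"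
proof -
  define P where "P G \<longleftrightarrow> G \<subseteq> mons X e \<and> card G = card F \<and> card (upshadow X G) \<le> card (upshadow X F)" for G
  have "P F" unfolding P_def using F by simp
  then obtain G where PG: "P G" and least: "\<And>H. P H \<Longrightarrow> lex_weight X e G \<le> lex_weight X e H"
    using ex_has_least_nat[of P F "lex_weight X e"] by blast
  have G: "G \<subseteq> mons X e" using PG P_def by auto
  have "compressed U V G" if "valid_pair X U V" for U V
    using least_weight_compressed[OF f G _ that] least PG unfolding P_def by auto
  then have "G = lexseg X e (card G)" using lex_upset_eq_lexseg[OF f compressed_lex_upset[OF f G]] by blast
  then show ?thesis using PG unfolding P_def by metis
qed

section \<open>Monomial subspaces\<close>

interpretation vsF: vector_space "scaleF :: 'k::field \<Rightarrow> (nat set \<Rightarrow> 'k) \<Rightarrow> (nat set \<Rightarrow> 'k)"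
  by (rule vector_space_scaleF)

lemma scaleF_apply [simp]: "scaleF c f S = c * f S"
  by (simp add: scaleF_def)

lemma sum_fun_apply: "(sum f A) x = (\<Sum>a\<in>A. f a x)"
  by (induction A rule: infinite_finite_induct) auto

lemma mon_apply: "mon S T = (if T = S then 1 else 0)"
  by (simp add: mon_def)

lemma inj_mon: "inj (mon :: nat set \<Rightarrow> nat set \<Rightarrow> 'k::field)"
  by (rule injI) (metis mon_apply one_neq_zero)

lemma independent_mon:
  assumes fA: "finite A"
  shows "vsF.independent (mon ` A :: (nat set \<Rightarrow> 'k::field) set)"
proof
  assume "vsF.dependent (mon ` A :: (nat set \<Rightarrow> 'k) set)"
  then obtain u where u: "\<exists>v\<in>mon ` A. u v \<noteq> 0"
    and s: "(\<Sum>v\<in>mon ` A. scaleF (u v) v) = (0 :: nat set \<Rightarrow> 'k)"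
    using vsF.dependent_finite[of "mon ` A"] fA by blast
  obtain T where T: "T \<in> A" "u (mon T) \<noteq> 0" using u by blast
  have "(\<Sum>v\<in>mon ` A. scaleF (u v) v) T = (\<Sum>S\<in>A. scaleF (u (mon S)) (mon S :: nat set \<Rightarrow> 'k)) T"
    by (simp add: sum.reindex[OF inj_on_subset[OF inj_mon subset_UNIV]] comp_def)
  also have "\<dots> = (\<Sum>S\<in>A. if S = T then u (mon T) else 0)"
    unfolding sum_fun_apply by (intro sum.cong) (auto simp: mon_apply)
  also have "\<dots> = u (mon T)" using T fA by (simp add: sum.delta')
  finally show False using s T by simp
qed

lemma dim_span_mon:
  assumes "finite A"
  shows "dimF (spanF (mon ` A) :: (nat set \<Rightarrow> 'k::field) set) = card A"
proof -
  have "dimF (spanF (mon ` A) :: (nat set \<Rightarrow> 'k) set) = card (mon ` A :: (nat set \<Rightarrow> 'k) set)"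
    by (rule vsF.dim_span_eq_card_independent[OF independent_mon[OF assms]])
  also have "\<dots> = card A" by (rule card_image[OF inj_on_subset[OF inj_mon subset_UNIV]])
  finally show ?thesis .
qed

lemma subspace_comp: "subspaceF (comp X e :: (nat set \<Rightarrow> 'k::field) set)"
  unfolding vsF.subspace_def comp_def by (auto simp: plus_fun_def) (metis add.right_neutral)

lemma span_mon_comp:
  assumes "A \<subseteq> mons X e"
  shows "spanF (mon ` A) \<subseteq> (comp X e :: (nat set \<Rightarrow> 'k::field) set)"
  by (rule vsF.span_minimal[OF _ subspace_comp]) (use assms in \<open>auto simp: comp_def mon_def split: if_splits\<close>)

lemma xmul_mon: "xmul j (mon S) = (if j \<in> S then 0 else mon (insert j S))"
  by (auto simp: xmul_def mon_def)

text \<open>Multiplication by x_j is linear, so vectors mapped into a subspace form a subspace.\<close>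

lemma subspace_preimage_xmul:
  assumes "subspaceF (W :: (nat set \<Rightarrow> 'k::field) set)"
  shows "subspaceF {w :: nat set \<Rightarrow> 'k. xmul j w \<in> W}"
proof -
  have "xmul j (f + g) = xmul j f + xmul j g" "xmul j (scaleF c f) = scaleF c (xmul j f)"
    "xmul j (0 :: nat set \<Rightarrow> 'k) = 0" for f g :: "nat set \<Rightarrow> 'k" and c
    by (auto simp: xmul_def)
  then show ?thesis using assms unfolding vsF.subspace_def by auto
qed

lemma mult1_span_mon:
  "mult1 X (spanF (mon ` A)) = (spanF (mon ` upshadow X A) :: (nat set \<Rightarrow> 'k::field) set)"
proof
  show "mult1 X (spanF (mon ` A)) \<subseteq> (spanF (mon ` upshadow X A) :: (nat set \<Rightarrow> 'k) set)"
    unfolding mult1_def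
  proof (rule vsF.span_minimal[OF _ vsF.subspace_span], safe)
    fix j and w :: "nat set \<Rightarrow> 'k" assume j: "j \<in> X" and w: "w \<in> spanF (mon ` A)"
    have "mon ` A \<subseteq> {w. xmul j w \<in> (spanF (mon ` upshadow X A) :: (nat set \<Rightarrow> 'k) set)}"
    proof (clarsimp simp: xmul_mon vsF.span_zero)
      fix S assume "S \<in> A" "j \<notin> S"
      then have "insert j S \<in> upshadow X A" using j unfolding upshadow_def by blast
      then show "mon (insert j S) \<in> (spanF (mon ` upshadow X A) :: (nat set \<Rightarrow> 'k) set)"
        by (simp add: vsF.span_base)
    qed
    from vsF.span_minimal[OF this subspace_preimage_xmul[OF vsF.subspace_span]] w
    show "xmul j w \<in> spanF (mon ` upshadow X A)" by blast
  qed
  show "(spanF (mon ` upshadow X A) :: (nat set \<Rightarrow> 'k) set) \<subseteq> mult1 X (spanF (mon ` A))"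
    unfolding mult1_def
  proof (rule vsF.span_minimal[OF _ vsF.subspace_span], safe)
    fix T assume "T \<in> upshadow X A"
    then obtain S j where T: "T = insert j S" and S: "S \<in> A" "j \<in> X" "j \<notin> S"
      unfolding upshadow_def by blast
    have "(mon T :: nat set \<Rightarrow> 'k) = xmul j (mon S)" using T S by (simp add: xmul_mon)
    moreover have "(mon S :: nat set \<Rightarrow> 'k) \<in> spanF (mon ` A)" using S by (simp add: vsF.span_base)
    ultimately show "(mon T :: nat set \<Rightarrow> 'k) \<in> spanF {xmul j w |j w. j \<in> X \<and> w \<in> spanF (mon ` A)}"
      using S by (intro vsF.span_base) blast
  qed
qed

lemma dim_mult1_mon:
  assumes "finite X" and "A \<subseteq> mons X e"
  shows "dimF (mult1 X (spanF (mon ` A)) :: (nat set \<Rightarrow> 'k::field) set) = card (upshadow X A)"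
  unfolding mult1_span_mon using dim_span_mon[OF finite_upshadow[OF assms(2,1)]] by simp

section \<open>Initial monomials and Kruskal--Katona for arbitrary subspaces\<close>

text \<open>The leading monomial of a nonzero element of R_e is the lex-largest monomial in its
  support; the initial set in(W) of a subspace collects the leading monomials of its
  nonzero elements.  in(W) has dim W elements and in(m_1 W) contains the upper shadow of
  in(W), which reduces the minimal growth of arbitrary subspaces to that of monomial ones.\<close>

definition supp :: "(nat set \<Rightarrow> 'k::field) \<Rightarrow> nat set set" where
  "supp f = {S. f S \<noteq> 0}"

definition lead :: "(nat set \<Rightarrow> 'k::field) \<Rightarrow> nat set" where
  "lead f = (SOME S. S \<in> supp f \<and> (\<forall>T\<in>supp f. T \<noteq> S \<longrightarrow> lex_gt S T))"

definition initial :: "(nat set \<Rightarrow> 'k::field) set \<Rightarrow> nat set set" where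
  "initial W = {lead f | f. f \<in> W \<and> f \<noteq> 0}"

lemma supp_comp: "f \<in> comp X e \<Longrightarrow> supp f \<subseteq> mons X e"
  unfolding supp_def comp_def by auto

lemma lead_props:
  assumes f: "finite X" and fc: "f \<in> comp X e" and nz: "f \<noteq> 0"
  shows "lead f \<in> supp f" "\<forall>T\<in>supp f. T \<noteq> lead f \<longrightarrow> lex_gt (lead f) T"
proof -
  have sm: "supp f \<subseteq> mons X e" using supp_comp[OF fc] .
  have "\<exists>S. S \<in> supp f \<and> (\<forall>T\<in>supp f. T \<noteq> S \<longrightarrow> lex_gt S T)"
  proof (rule bexE[OF lex_max_exists])
    show "finite (supp f)" using finite_mons_family[OF f sm] .
    show "supp f \<noteq> {}" using nz unfolding supp_def by (auto simp: fun_eq_iff)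
    show "\<forall>S\<in>supp f. finite S" using sm mons_finite[OF f] by blast
  qed blast
  then have "lead f \<in> supp f \<and> (\<forall>T\<in>supp f. T \<noteq> lead f \<longrightarrow> lex_gt (lead f) T)"
    unfolding lead_def by (rule someI_ex)
  then show "lead f \<in> supp f" "\<forall>T\<in>supp f. T \<noteq> lead f \<longrightarrow> lex_gt (lead f) T" by auto
qed

lemma lead_nonzero: "finite X \<Longrightarrow> f \<in> comp X e \<Longrightarrow> f \<noteq> 0 \<Longrightarrow> f (lead f) \<noteq> 0"
  using lead_props(1) unfolding supp_def by blast

lemma lead_mons: "finite X \<Longrightarrow> f \<in> comp X e \<Longrightarrow> f \<noteq> 0 \<Longrightarrow> lead f \<in> mons X e"
  using lead_props(1) supp_comp by blast

lemma lead_unique: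
  assumes f: "finite X" and fc: "g \<in> comp X e" and S: "S \<in> supp g"
    and mx: "\<forall>T\<in>supp g. T \<noteq> S \<longrightarrow> lex_gt S T"
  shows "lead g = S"
proof (rule ccontr)
  assume ne: "lead g \<noteq> S"
  have nz: "g \<noteq> 0" using S unfolding supp_def by auto
  note l = lead_props[OF f fc nz]
  have "lex_gt S (lead g)" "lex_gt (lead g) S" using mx l S ne by auto
  moreover have "finite S" "finite (lead g)" using supp_comp[OF fc] S l(1) mons_finite[OF f] by auto
  ultimately show False using lex_asym by blast
qed

lemma initial_mons: "finite X \<Longrightarrow> W \<subseteq> comp X e \<Longrightarrow> initial W \<subseteq> mons X e"
  unfolding initial_def using lead_mons by blast

lemma finite_initial: "finite X \<Longrightarrow> W \<subseteq> comp X e \<Longrightarrow> finite (initial W)"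
  by (rule finite_mons_family[OF _ initial_mons])

lemma xmul_comp:
  assumes f: "finite X" and fc: "w \<in> comp X e" and j: "j \<in> X"
  shows "xmul j w \<in> comp X (Suc e)"
  unfolding comp_def
proof (intro CollectI allI impI)
  fix T assume "xmul j w T \<noteq> 0"
  then have jT: "j \<in> T" and "w (T - {j}) \<noteq> 0" unfolding xmul_def by (auto split: if_splits)
  then have "T - {j} \<in> mons X e" using fc unfolding comp_def by auto
  then have "insert j (T - {j}) \<in> mons X (Suc e)" using mons_insert[OF _ f j] by blast
  then show "T \<in> mons X (Suc e)" using jT by (simp add: insert_absorb)
qed

lemma mult1_comp:
  assumes f: "finite X" and W: "W \<subseteq> comp X e"
  shows "mult1 X W \<subseteq> (comp X (Suc e) :: (nat set \<Rightarrow> 'k::field) set)"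
  unfolding mult1_def
  by (rule vsF.span_minimal[OF _ subspace_comp]) (use W xmul_comp[OF f] in blast)

text \<open>Multiplying by a variable j not dividing the leading monomial S gives x_j S as
  the new leading monomial: the lex comparison with the other terms is unaffected by j.\<close>

lemma lead_xmul:
  assumes f: "finite X" and fc: "w \<in> comp X e" and nz: "w \<noteq> 0" and j: "j \<in> X" "j \<notin> lead w"
  shows "xmul j w \<noteq> 0" "lead (xmul j w) = insert j (lead w)"
proof -
  let ?S = "lead w"
  note l = lead_props[OF f fc nz]
  have sm: "supp w \<subseteq> mons X e" using supp_comp[OF fc] .
  have fS: "finite ?S" using l sm mons_finite[OF f] by blast
  have in1: "insert j ?S \<in> supp (xmul j w)" using l j unfolding supp_def xmul_def by auto
  then show "xmul j w \<noteq> 0" unfolding supp_def by auto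
  have "lex_gt (insert j ?S) T" if T: "T \<in> supp (xmul j w)" "T \<noteq> insert j ?S" for T
  proof -
    have jT: "j \<in> T" and R: "T - {j} \<in> supp w" using T unfolding supp_def xmul_def by (auto split: if_splits)
    have fR: "finite (T - {j})" using R sm mons_finite[OF f] by blast
    have "T - {j} \<noteq> ?S" using T(2) jT by auto
    then have "lex_gt ?S (T - {j})" using l R by auto
    then obtain m where m: "m \<in> ?S" "m \<notin> T - {j}" "\<forall>x<m. x \<in> ?S \<longleftrightarrow> x \<in> T - {j}"
      using lex_gt_iff[OF fS fR] by blast
    have "m \<noteq> j" using m j by auto
    then have "m \<in> insert j ?S" "m \<notin> T" "\<forall>x<m. x \<in> insert j ?S \<longleftrightarrow> x \<in> T" using m jT by auto
    then show ?thesis using lex_gt_iff[of "insert j ?S" T] fS fR by auto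
  qed
  then show "lead (xmul j w) = insert j ?S"
    using lead_unique[OF f xmul_comp[OF f fc j(1)] in1] by blast
qed

lemma upshadow_initial:
  assumes f: "finite X" and W: "W \<subseteq> comp X e"
  shows "upshadow X (initial W) \<subseteq> initial (mult1 X (W :: (nat set \<Rightarrow> 'k::field) set))"
proof
  fix T assume "T \<in> upshadow X (initial W)"
  then obtain S j where T: "T = insert j S" and S: "S \<in> initial W" and j: "j \<in> X" "j \<notin> S"
    unfolding upshadow_def by blast
  obtain w where w: "w \<in> W" "w \<noteq> 0" "S = lead w" using S unfolding initial_def by blast
  have wc: "w \<in> comp X e" using w W by auto
  have "xmul j w \<in> mult1 X W" unfolding mult1_def using w j by (intro vsF.span_base) blast
  moreover have "xmul j w \<noteq> 0" "lead (xmul j w) = T" using lead_xmul[OF f wc w(2) j(1)] j w T by auto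
  ultimately show "T \<in> initial (mult1 X W)" unfolding initial_def by force
qed

text \<open>Choosing for each initial monomial S an element of W with leading monomial S gives
  a basis of W (lemma dim_eq_card_initial).\<close>

lemma initial_generators:
  obtains g where "\<forall>S\<in>initial W. g S \<in> W \<and> g S \<noteq> 0 \<and> lead (g S) = S"
proof -
  have "\<forall>S\<in>initial W. \<exists>h. h \<in> W \<and> h \<noteq> 0 \<and> lead h = S" unfolding initial_def by blast
  then show ?thesis using that by (metis bchoice)
qed

lemma initial_generators_independent:
  assumes f: "finite X" and W: "W \<subseteq> comp X e"
    and g: "\<forall>S\<in>initial W. g S \<in> W \<and> g S \<noteq> 0 \<and> lead (g S) = S"
  shows "vsF.independent (g ` initial W :: (nat set \<Rightarrow> 'k::field) set)"
proof
  let ?B = "g ` initial W"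
  have fB: "finite ?B" using finite_initial[OF f W] by simp
  assume "vsF.dependent ?B"
  then obtain u where u: "\<exists>v\<in>?B. u v \<noteq> 0" and s: "(\<Sum>v\<in>?B. scaleF (u v) v) = 0"
    using vsF.dependent_finite[OF fB] by blast
  \<comment> \<open>The lex-largest leading monomial S occurring with nonzero coefficient survives.\<close>
  define D where "D = {S \<in> initial W. u (g S) \<noteq> 0}"
  have Dm: "D \<subseteq> mons X e" using initial_mons[OF f W] D_def by auto
  obtain S where S: "S \<in> D" and Smax: "\<forall>T\<in>D. T \<noteq> S \<longrightarrow> lex_gt S T"
    using lex_max_exists[of D] u finite_mons_family[OF f Dm] Dm mons_finite[OF f] unfolding D_def by blast
  have SW: "S \<in> initial W" and uS: "u (g S) \<noteq> 0" using S D_def by auto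
  have gSc: "g S \<in> comp X e" "g S \<noteq> 0" "lead (g S) = S" using g SW W by auto
  have zero: "u v * v S = 0" if v: "v \<in> ?B" "v \<noteq> g S" for v
  proof (rule ccontr)
    assume a: "u v * v S \<noteq> 0"
    obtain T where T: "T \<in> initial W" "v = g T" using v(1) by blast
    have TS: "T \<noteq> S" using T(2) v(2) by blast
    then have "lex_gt S T" using Smax T a D_def by auto
    moreover have vc: "v \<in> comp X e" "v \<noteq> 0" "lead v = T" using g T W by auto
    then have "lex_gt T S" using lead_props(2)[OF f vc(1,2)] a TS unfolding supp_def by auto
    moreover have "finite S" "finite T" using Dm S initial_mons[OF f W] T(1) mons_finite[OF f] by auto
    ultimately show False using lex_asym by blast
  qed
  have "0 = (\<Sum>v\<in>?B. scaleF (u v) v) S" using s by simp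
  also have "\<dots> = (\<Sum>v\<in>?B. if v = g S then u (g S) * g S S else 0)"
    unfolding sum_fun_apply scaleF_apply by (rule sum.cong) (use zero in auto)
  also have "\<dots> = u (g S) * g S S" using SW fB by (simp add: sum.delta')
  finally show False using uS lead_nonzero[OF f gSc(1,2)] gSc(3) by simp
qed

lemma lead_cancel:
  assumes f: "finite X" and h: "h \<in> comp X e" "h \<noteq> 0" and q: "q \<in> comp X e" "q \<noteq> 0"
    and lq: "lead q = lead h"
  defines "h' \<equiv> h + scaleF (- (h (lead h) / q (lead h))) q"
  assumes nz: "h' \<noteq> 0"
  shows "lex_gt (lead h) (lead h')"
proof -
  let ?S = "lead h"
  have h'c: "h' \<in> comp X e" unfolding h'_def
    by (rule vsF.subspace_add[OF subspace_comp h(1) vsF.subspace_scale[OF subspace_comp q(1)]])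
  have "h' ?S = 0" unfolding h'_def using lead_nonzero[OF f q] lq by simp
  then have "lead h' \<noteq> ?S" using lead_nonzero[OF f h'c nz] by auto
  moreover have "h (lead h') \<noteq> 0 \<or> q (lead h') \<noteq> 0"
    using lead_nonzero[OF f h'c nz] unfolding h'_def by auto
  ultimately show ?thesis
    using lead_props(2)[OF f h] lead_props(2)[OF f q] lq unfolding supp_def by auto
qed

lemma initial_generators_span:
  assumes f: "finite X" and W: "W \<subseteq> comp X e" and sW: "subspaceF (W :: (nat set \<Rightarrow> 'k::field) set)"
    and g: "\<forall>S\<in>initial W. g S \<in> W \<and> g S \<noteq> 0 \<and> lead (g S) = S"
    and h: "h \<in> W"
  shows "h \<in> spanF (g ` initial W)"
  using h
proof (induction "card (mons X e) - lex_rank X e (lead h)" arbitrary: h rule: less_induct)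
  case less
  show ?case
  proof (cases "h = 0")
    case True then show ?thesis by (simp add: vsF.span_zero)
  next
    case False
    let ?S = "lead h" and ?q = "g (lead h)"
    have hc: "h \<in> comp X e" using less.prems W by auto
    have Sin: "?S \<in> initial W" using less.prems False unfolding initial_def by blast
    have q: "?q \<in> W" "?q \<noteq> 0" "lead ?q = ?S" using g Sin by auto
    have qc: "?q \<in> comp X e" using q(1) W by auto
    define h' where "h' = h + scaleF (- (h ?S / ?q ?S)) ?q"
    have h'W: "h' \<in> W" unfolding h'_def
      by (rule vsF.subspace_add[OF sW less.prems vsF.subspace_scale[OF sW q(1)]])
    have "h' \<in> spanF (g ` initial W)"
    proof (cases "h' = 0")
      case True then show ?thesis by (simp add: vsF.span_zero)
    next
      case False
      have h'c: "h' \<in> comp X e" using h'W W by auto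
      have "lex_gt ?S (lead h')"
        using lead_cancel[OF f hc \<open>h \<noteq> 0\<close> qc q(2,3)] False unfolding h'_def by blast
      then have "lex_rank X e ?S < lex_rank X e (lead h')"
        using lex_rank_mono[OF f lead_mons[OF f h'c False] lead_mons[OF f hc \<open>h \<noteq> 0\<close>]] by blast
      moreover have "lex_rank X e (lead h') < card (mons X e)"
        using lex_rank_less_card[OF f lead_mons[OF f h'c False]] .
      ultimately show ?thesis using less.hyps h'W by simp
    qed
    moreover have "?q \<in> spanF (g ` initial W)" using Sin by (intro vsF.span_base) blast
    ultimately have "h' + scaleF (h ?S / ?q ?S) ?q \<in> spanF (g ` initial W)"
      by (intro vsF.span_add vsF.span_scale)
    moreover have "h = h' + scaleF (h ?S / ?q ?S) ?q" unfolding h'_def by (auto simp: fun_eq_iff)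
    ultimately show ?thesis by simp
  qed
qed

lemma dim_eq_card_initial:
  assumes f: "finite X" and W: "W \<subseteq> comp X e" and sW: "subspaceF (W :: (nat set \<Rightarrow> 'k::field) set)"
  shows "dimF W = card (initial W)"
proof -
  obtain g where g: "\<forall>S\<in>initial W. g S \<in> W \<and> g S \<noteq> 0 \<and> lead (g S) = S"
    by (rule initial_generators)
  have "inj_on g (initial W)" using g by (metis inj_onI)
  then have "card (initial W) = card (g ` initial W)" by (simp add: card_image)
  also have "\<dots> = dimF W"
  proof (rule vsF.basis_card_eq_dim)
    show "g ` initial W \<subseteq> W" using g by blast
    show "W \<subseteq> spanF (g ` initial W)" using initial_generators_span[OF f W sW g] by blast
    show "vsF.independent (g ` initial W)" by (rule initial_generators_independent[OF f W g])
  qed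
  finally show ?thesis by simp
qed

theorem lexseg_least_mult1:
  assumes f: "finite X" and W: "W \<subseteq> comp X e" and sW: "subspaceF (W :: (nat set \<Rightarrow> 'k::field) set)"
    and k: "k \<le> dimF W"
  shows "card (upshadow X (lexseg X e k)) \<le> dimF (mult1 X W)"
proof -
  have kF: "k \<le> card (initial W)" using k dim_eq_card_initial[OF f W sW] by simp
  have "card (upshadow X (lexseg X e k)) \<le> card (upshadow X (lexseg X e (card (initial W))))"
    by (rule card_mono[OF finite_upshadow[OF lexseg_sub f] upshadow_mono[OF lexseg_mono[OF kF]]])
  also have "\<dots> \<le> card (upshadow X (initial W))"
    by (rule lexseg_least_upshadow[OF f initial_mons[OF f W]])
  also have "\<dots> \<le> card (initial (mult1 X W))"
    by (rule card_mono[OF finite_initial[OF f mult1_comp[OF f W]] upshadow_initial[OF f W]])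
  also have "\<dots> = dimF (mult1 X W)"
    using dim_eq_card_initial[OF f mult1_comp[OF f W]] unfolding mult1_def by (simp add: vsF.subspace_span)
  finally show ?thesis .
qed

section \<open>The x_i-decomposition\<close>

text \<open>Throughout, Q is the set of variables other than x_i, so that the whole ring lives
  in the variables insert i Q.  A family of monomials in the variables insert i Q
  is written as A0 \<union> x_i A1 with A0, A1 families of monomials in Q.\<close>

lemma decomposition:
  "M = {S \<in> M. i \<notin> S} \<union> insert i ` {S - {i} | S. S \<in> M \<and> i \<in> S}"
proof (intro equalityI subsetI)
  fix S assume "S \<in> M"
  then show "S \<in> {S \<in> M. i \<notin> S} \<union> insert i ` {S - {i} | S. S \<in> M \<and> i \<in> S}"
    by (cases "i \<in> S") (auto intro!: image_eqI[of S _ "S - {i}"])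
qed (auto simp: insert_absorb)

lemma decomposition_mons:
  assumes "M \<subseteq> mons (insert i Q) (Suc e)" and "finite Q"
  shows "{S \<in> M. i \<notin> S} \<subseteq> mons Q (Suc e)" "{S - {i} | S. S \<in> M \<and> i \<in> S} \<subseteq> mons Q e"
  using assms unfolding mons_def by (auto dest: finite_subset)

lemma composition_mons:
  assumes "A0 \<subseteq> mons Q (Suc e)" "A1 \<subseteq> mons Q e" "finite Q" "i \<notin> Q"
  shows "A0 \<union> insert i ` A1 \<subseteq> mons (insert i Q) (Suc e)"
proof -
  have "insert i S \<in> mons (insert i Q) (Suc e)" if "S \<in> A1" for S
  proof -
    have S: "S \<subseteq> Q" "card S = e" using that assms(2) unfolding mons_def by auto
    then have "finite S" "i \<notin> S" using assms(3,4) finite_subset by auto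
    then show ?thesis using S unfolding mons_def by auto
  qed
  moreover have "A0 \<subseteq> mons (insert i Q) (Suc e)" using assms(1) unfolding mons_def by auto
  ultimately show ?thesis by blast
qed

lemma mons_avoid: "i \<notin> Q \<Longrightarrow> F \<subseteq> mons Q d \<Longrightarrow> \<forall>S\<in>F. i \<notin> S"
  unfolding mons_def by auto

lemma card_composition:
  assumes "finite A0" "finite A1" "\<forall>S\<in>A0. i \<notin> S" "\<forall>S\<in>A1. i \<notin> S"
  shows "card (A0 \<union> insert i ` A1) = card A0 + card A1"
proof -
  have "inj_on (insert i) A1" using assms(4) by (intro inj_onI) (metis insert_ident)
  moreover have "A0 \<inter> insert i ` A1 = {}" using assms(3) by auto
  ultimately show ?thesis using assms(1,2) by (simp add: card_Un_disjoint card_image)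
qed

lemma upshadow_insert_var:
  assumes A: "\<forall>S\<in>A. i \<notin> S"
  shows "upshadow (insert i Q) A = upshadow Q A \<union> insert i ` A"
proof
  show "upshadow (insert i Q) A \<subseteq> upshadow Q A \<union> insert i ` A"
    unfolding upshadow_def by blast
  show "upshadow Q A \<union> insert i ` A \<subseteq> upshadow (insert i Q) A"
    using A unfolding upshadow_def by blast
qed

lemma upshadow_insert_image:
  assumes iQ: "i \<notin> Q" and A: "\<forall>S\<in>A. i \<notin> S"
  shows "upshadow (insert i Q) (insert i ` A) = insert i ` upshadow Q A"
proof
  show "upshadow (insert i Q) (insert i ` A) \<subseteq> insert i ` upshadow Q A"
  proof
    fix T assume "T \<in> upshadow (insert i Q) (insert i ` A)"
    then obtain S j where "T = insert j (insert i S)" "S \<in> A" "j \<in> Q" "j \<notin> S"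
      unfolding upshadow_def by blast
    then show "T \<in> insert i ` upshadow Q A" unfolding upshadow_def by (auto simp: insert_commute)
  qed
  show "insert i ` upshadow Q A \<subseteq> upshadow (insert i Q) (insert i ` A)"
  proof
    fix T assume "T \<in> insert i ` upshadow Q A"
    then obtain S j where "T = insert i (insert j S)" "S \<in> A" "j \<in> Q" "j \<notin> S"
      unfolding upshadow_def by blast
    then have "T = insert j (insert i S)" "insert i S \<in> insert i ` A" "j \<in> insert i Q" "j \<notin> insert i S"
      using iQ by (auto simp: insert_commute)
    then show "T \<in> upshadow (insert i Q) (insert i ` A)" unfolding upshadow_def by blast
  qed
qed

lemma upshadow_composition:
  assumes iQ: "i \<notin> Q" and A0: "\<forall>S\<in>A0. i \<notin> S" and A1: "\<forall>S\<in>A1. i \<notin> S"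
  shows "upshadow (insert i Q) (A0 \<union> insert i ` A1) = upshadow Q A0 \<union> insert i ` (A0 \<union> upshadow Q A1)"
  unfolding upshadow_Un upshadow_insert_var[OF A0] upshadow_insert_image[OF iQ A1] image_Un
  by blast

lemma card_upshadow_composition:
  assumes A0: "A0 \<subseteq> mons Q d0" and A1: "A1 \<subseteq> mons Q d1" and Q: "finite Q" "i \<notin> Q"
  shows "card (upshadow (insert i Q) (A0 \<union> insert i ` A1))
           = card (upshadow Q A0) + card (A0 \<union> upshadow Q A1)"
proof -
  have up0: "upshadow Q A0 \<subseteq> mons Q (Suc d0)" and up1: "upshadow Q A1 \<subseteq> mons Q (Suc d1)"
    using upshadow_mons A0 A1 Q(1) by blast+
  have "card (upshadow (insert i Q) (A0 \<union> insert i ` A1))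
      = card (upshadow Q A0 \<union> insert i ` (A0 \<union> upshadow Q A1))"
    using upshadow_composition[OF Q(2) mons_avoid[OF Q(2) A0] mons_avoid[OF Q(2) A1]] by simp
  also have "\<dots> = card (upshadow Q A0) + card (A0 \<union> upshadow Q A1)"
  proof (rule card_composition)
    show "finite (upshadow Q A0)" "finite (A0 \<union> upshadow Q A1)"
      using finite_upshadow[OF A0 Q(1)] finite_upshadow[OF A1 Q(1)] finite_mons_family[OF Q(1) A0] by auto
    show "\<forall>S\<in>upshadow Q A0. i \<notin> S" using mons_avoid[OF Q(2) up0] .
    show "\<forall>S\<in>A0 \<union> upshadow Q A1. i \<notin> S" using mons_avoid[OF Q(2) A0] mons_avoid[OF Q(2) up1] by blast
  qed
  finally show ?thesis .
qed

section \<open>Gotzmann monomial spaces and the x_i-compression\<close>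

lemma gotzmann_upshadow_le:
  assumes f: "finite X" and M: "M \<subseteq> mons X d" and N: "N \<subseteq> mons X d" and card: "card N = card M"
    and gz: "gotzmann X d (spanF (mon ` M) :: (nat set \<Rightarrow> 'k::field) set)"
  shows "card (upshadow X M) \<le> card (upshadow X N)"
proof -
  have "dimF (spanF (mon ` N) :: (nat set \<Rightarrow> 'k) set) = dimF (spanF (mon ` M) :: (nat set \<Rightarrow> 'k) set)"
    using dim_span_mon[OF finite_mons_family[OF f N], where 'k='k]
      dim_span_mon[OF finite_mons_family[OF f M], where 'k='k] card by simp
  then have "dimF (mult1 X (spanF (mon ` M)) :: (nat set \<Rightarrow> 'k) set) \<le> dimF (mult1 X (spanF (mon ` N)) :: (nat set \<Rightarrow> 'k) set)"
    using gz vsF.subspace_span span_mon_comp[OF N] unfolding gotzmann_def by blast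
  then show ?thesis using dim_mult1_mon[OF f M, where 'k='k] dim_mult1_mon[OF f N, where 'k='k] by simp
qed

text \<open>Conversely, by Kruskal--Katona for subspaces, a monomial space whose upper shadow
  is no larger than that of the lex segment of its size is Gotzmann.\<close>

lemma gotzmann_monI:
  assumes f: "finite X" and A: "A \<subseteq> mons X e"
    and le: "card (upshadow X A) \<le> card (upshadow X (lexseg X e (card A)))"
  shows "gotzmann X e (spanF (mon ` A) :: (nat set \<Rightarrow> 'k::field) set)"
  unfolding gotzmann_def
proof (intro conjI allI impI vsF.subspace_span span_mon_comp[OF A])
  fix W :: "(nat set \<Rightarrow> 'k) set"
  assume W: "subspaceF W \<and> W \<subseteq> comp X e \<and> dimF W = dimF (spanF (mon ` A) :: (nat set \<Rightarrow> 'k) set)"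
  then have "card A \<le> dimF W" using dim_span_mon[OF finite_mons_family[OF f A], where 'k='k] by simp
  then have "card (upshadow X (lexseg X e (card A))) \<le> dimF (mult1 X W)"
    using lexseg_least_mult1[OF f] W by blast
  then show "dimF (mult1 X (spanF (mon ` A)) :: (nat set \<Rightarrow> 'k) set) \<le> dimF (mult1 X W)"
    using le dim_mult1_mon[OF f A, where 'k='k] by simp
qed

text \<open>The heart of Lemma 4.6.  Let M = M0 \<union> x_i M1 span a Gotzmann space and let L0, L1 be
  the lex segments of sizes |M0|, |M1|.  The upper shadows of L0 and of n_1 L1 are lex
  segments of the same degree, hence nested.  If n_1 L1 is not inside L0, then L0 lies in
  n_1 L1, and comparing M with its compression L0 \<union> x_i L1 gives
    |n_1 L0| + |n_1 M1| \<le> |n_1 M0| + |M0 \<union> n_1 M1| = |m_1 M| \<le> |m_1 (L0 \<union> x_i L1)|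
      = |n_1 L0| + |n_1 L1|,
  using Kruskal--Katona for M0; so M1 grows no more than its lex segment.\<close>

lemma gotzmann_compression:
  assumes Q: "finite Q" "i \<notin> Q" and M: "M \<subseteq> mons (insert i Q) (Suc e)"
    and gz: "gotzmann (insert i Q) (Suc e) (spanF (mon ` M) :: (nat set \<Rightarrow> 'k::field) set)"
  defines "M0 \<equiv> {S \<in> M. i \<notin> S}" and "M1 \<equiv> {S - {i} | S. S \<in> M \<and> i \<in> S}"
  defines "L0 \<equiv> lexseg Q (Suc e) (card M0)" and "L1 \<equiv> lexseg Q e (card M1)"
  shows "gotzmann Q e (spanF (mon ` M1) :: (nat set \<Rightarrow> 'k) set) \<or> upshadow Q L1 \<subseteq> L0"
proof (rule disjCI)
  assume notsub: "\<not> upshadow Q L1 \<subseteq> L0"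
  have M0: "M0 \<subseteq> mons Q (Suc e)" and M1: "M1 \<subseteq> mons Q e"
    using decomposition_mons[OF M Q(1)] unfolding M0_def M1_def by auto
  have L0: "L0 \<subseteq> mons Q (Suc e)" and L1: "L1 \<subseteq> mons Q e" unfolding L0_def L1_def by (rule lexseg_sub)+
  have "lex_upset Q (Suc e) L0" "lex_upset Q (Suc e) (upshadow Q L1)"
    unfolding L0_def L1_def using lexseg_lex_upset upshadow_lex_upset Q(1) by blast+
  then have "L0 \<subseteq> upshadow Q L1" using lex_upset_nested[OF Q(1)] notsub by blast
  then have uN: "L0 \<union> upshadow Q L1 = upshadow Q L1" by blast
  have cL: "card L0 = card M0" "card L1 = card M1"
    unfolding L0_def L1_def using card_lexseg[OF Q(1)] card_mono[OF finite_mons[OF Q(1)]] M0 M1 by auto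
  have MM: "M = M0 \<union> insert i ` M1" unfolding M0_def M1_def by (rule decomposition)
  have "card (L0 \<union> insert i ` L1) = card M"
    using card_composition[OF finite_mons_family[OF Q(1)] finite_mons_family[OF Q(1)]]
      mons_avoid[OF Q(2)] L0 L1 M0 M1 cL MM by metis
  then have "card (upshadow (insert i Q) M) \<le> card (upshadow (insert i Q) (L0 \<union> insert i ` L1))"
    using gotzmann_upshadow_le[OF _ M composition_mons[OF L0 L1 Q] _ gz] Q(1) by simp
  moreover have "card (upshadow Q L0) \<le> card (upshadow Q M0)"
    unfolding L0_def by (rule lexseg_least_upshadow[OF Q(1) M0])
  moreover have "card (upshadow Q M1) \<le> card (M0 \<union> upshadow Q M1)"
    using finite_upshadow[OF M1 Q(1)] finite_mons_family[OF Q(1) M0] by (intro card_mono) auto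
  ultimately have "card (upshadow Q M1) \<le> card (upshadow Q (lexseg Q e (card M1)))"
    using card_upshadow_composition[OF M0 M1 Q] card_upshadow_composition[OF L0 L1 Q] uN MM
    unfolding L1_def by simp
  then show "gotzmann Q e (spanF (mon ` M1) :: (nat set \<Rightarrow> 'k) set)"
    by (rule gotzmann_monI[OF Q(1) M1])
qed

theorem lemma4p6:
  fixes n d i :: nat and M :: "nat set set"
  assumes "i \<in> {1..n}"
    and "M \<subseteq> mons {1..n} d"
    and "gotzmann {1..n} d (spanF (mon ` M) :: (nat set \<Rightarrow> 'k::field) set)"
  defines "M0 \<equiv> {S \<in> M. i \<notin> S}"
    and "M1 \<equiv> {S - {i} | S. S \<in> M \<and> i \<in> S}"
  shows "gotzmann ({1..n} - {i}) (d - 1) (spanF (mon ` M1) :: (nat set \<Rightarrow> 'k) set)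
         \<or> mult1 ({1..n} - {i}) (spanF (mon ` lexseg ({1..n} - {i}) (d - 1) (card M1)))
             \<subseteq> (spanF (mon ` lexseg ({1..n} - {i}) d (card M0)) :: (nat set \<Rightarrow> 'k) set)"
proof -
  let ?Q = "{1..n} - {i}"
  have X: "{1..n} = insert i ?Q" using assms(1) by blast
  have mult1_sub: "mult1 ?Q (spanF (mon ` A)) \<subseteq> (spanF (mon ` B) :: (nat set \<Rightarrow> 'k) set)"
    if "upshadow ?Q A \<subseteq> B" for A B
    unfolding mult1_span_mon using that by (intro vsF.span_mono image_mono)
  show ?thesis
  proof (cases d)
    case 0
    \<comment> \<open>In degree 0 no monomial is divisible by x_i, so M1 and its lex segment are empty.\<close>
    have "S = {}" if "S \<in> M" for S
      using that assms(2) 0 finite_subset[of S "{1..n}"] unfolding mons_def by auto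
    then have "M1 = {}" unfolding M1_def by auto
    then show ?thesis using mult1_sub[of "lexseg ?Q (d - 1) 0"] unfolding lexseg_def upshadow_def by auto
  next
    case (Suc e)
    have "finite ?Q" "i \<notin> ?Q" by auto
    moreover have "M \<subseteq> mons (insert i ?Q) (Suc e)"
      and "gotzmann (insert i ?Q) (Suc e) (spanF (mon ` M) :: (nat set \<Rightarrow> 'k) set)"
      using assms(2,3) Suc X by simp_all
    ultimately have "gotzmann ?Q e (spanF (mon ` M1) :: (nat set \<Rightarrow> 'k) set)
        \<or> upshadow ?Q (lexseg ?Q e (card M1)) \<subseteq> lexseg ?Q (Suc e) (card M0)"
      unfolding M0_def M1_def by (rule gotzmann_compression)
    then show ?thesis using mult1_sub Suc by auto
  qed
qed

end
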